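(* The assignment $c\mapsto[\![c]\!]_{op}$ is a morphism of props $\mathsf{ACirc}\to\mathsf{Traj}$; that is, for all circuits $c,d$: $[\![c;d]\!]_{op}=[\![c]\!]_{op};[\![d]\!]_{op}$ whenever $c;d$ is defined, $[\![c\oplus d]\!]_{op}=[\![c]\!]_{op}\oplus[\![d]\!]_{op}$, and identities and symmetries are sent to the identities and symmetries of $\mathsf{Traj}$.
   Context: Fix a field $k$. Circuits are terms built from generators, each with a sort $(n,m)$: copier $\Delta:(1,2)$, discard $!:(1,0)$, amplifier $\mathsf{s}_r:(1,1)$ ($r\in k$), register $\mathsf{x}:(1,1)$, adder $+:(2,1)$, zero $0:(0,1)$, one $\mathbf{1}:(0,1)$; mirror images $\Delta^{op}:(2,1)$, $!^{op}:(0,1)$, $\mathsf{s}_r^{op}:(1,1)$, $\mathsf{x}^{op}:(1,1)$, $+^{op}:(1,2)$, $0^{op}:(1,0)$, $\mathbf{1}^{op}:(1,0)$; $\mathrm{id}_0:(0,0)$, $\mathrm{id}_1:(1,1)$, $\mathrm{sw}:(2,2)$; closed under sequential composition $c;d$ (matching middle sort) and parallel composition $c\oplus d$ (sorts add). Modulo symmetric monoidal category laws they form the prop $\mathsf{ACirc}$. Operational semantics: a state is a circuit with a value of $k$ in each register ($\mathsf x$, $\mathsf x^{op}$); the initial state $c_0$ stores $0$ everywhere. Transitions $t\vdash c\xrightarrow[w]{v}c'$ (time $t\in\mathbb Z$, left label $v\in k^n$, right label $w\in k^m$) are generated by, for all $t$ and $a,b\in k$: $\Delta$: left $a$, right $(a,a)$;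 $!$: left $a$, right $\bullet$; $+$: left $(a,b)$, right $a+b$; $0$: left $\bullet$, right $0$; $\mathsf s_r$: left $a$, right $ra$; $\mathsf x$ storing $b$: left $a$, right $b$, then stores $a$; $\mathbf 1$: left $\bullet$, right $1$ if $t=0$, $0$ if $t\neq0$; mirrored generators: same rules with left/right labels exchanged; $\mathrm{id}_1$: $a/a$; $\mathrm{sw}$: $(a,b)/(b,a)$; $\mathrm{id}_0$: $\bullet/\bullet$; for $;$ the components synchronise at the same time on the shared middle label, for $\oplus$ they move at the same time with labels concatenated. A computation starting at time $t\le0$ is a sequence of transitions $t\vdash c_0\xrightarrow[v_t]{u_t}c_1$, $t+1\vdash c_1\xrightarrow[v_{t+1}]{u_{t+1}}c_2,\dots$ from the initial state. An $(n,m)$-trajectory is a map $\sigma:\mathbb Z\to k^n\times k^m$ with some $j$ such that $\sigma(i)=(0,0)$ for all $i\le j$; write $\sigma=\langle\sigma_l,\sigma_r\rangle$. For sets $S$ of $(k',m)$-trajectories and $T$ of $(m,n)$-trajectories, $S;T=\{\langle\sigma_l,\tau_r\rangle:\sigma\in S,\tau\in T,\sigma_r=\tau_l\}$; $S_1\oplus S_2=\{\sigma_1\oplus\sigma_2\}$ with $(\sigma_1\oplus\sigma_2)(i)$ the componentwise stacking of $\sigma_1(i)$ and $\sigma_2(i)$. These form a prop $\mathsf{Traj}$ whose arrows $n\to m$ are sets of $(n,m)$-trajectories. $[\![c]\!]_{op}$ is the set of trajectories $\sigma$ associated to infinite computations of $c$: $\sigma(i)=(u_i,v_i)$ for $i\ge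 t$ and $(0,0)$ for $i<t$, where $t$ is the starting time. *)

theory Defs
  imports Main
begin

text \<open>Terms over generators. The parameter 'r is the content of register nodes:
  for circuits it is unit, for states it is the stored field value.\<close>
datatype ('k, 'r) cterm =
    Copy | Disc | Amp 'k | Reg 'r | Add | Zero | One
  | CopyOp | DiscOp | AmpOp 'k | RegOp 'r | AddOp | ZeroOp | OneOp
  | Id0 | Id1 | Sw
  | Seq "('k, 'r) cterm" "('k, 'r) cterm"
  | Par "('k, 'r) cterm" "('k, 'r) cterm"

type_synonym 'k circ = "('k, unit) cterm"
type_synonym 'k state = "('k, 'k) cterm"

fun cdom :: "('k, 'r) cterm \<Rightarrow> nat" and ccod :: "('k, 'r) cterm \<Rightarrow> nat" where
  "cdom Copy = 1" | "ccod Copy = 2"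
| "cdom Disc = 1" | "ccod Disc = 0"
| "cdom (Amp r) = 1" | "ccod (Amp r) = 1"
| "cdom (Reg x) = 1" | "ccod (Reg x) = 1"
| "cdom Add = 2" | "ccod Add = 1"
| "cdom Zero = 0" | "ccod Zero = 1"
| "cdom One = 0" | "ccod One = 1"
| "cdom CopyOp = 2" | "ccod CopyOp = 1"
| "cdom DiscOp = 0" | "ccod DiscOp = 1"
| "cdom (AmpOp r) = 1" | "ccod (AmpOp r) = 1"
| "cdom (RegOp x) = 1" | "ccod (RegOp x) = 1"
| "cdom AddOp = 1" | "ccod AddOp = 2"
| "cdom ZeroOp = 1" | "ccod ZeroOp = 0"
| "cdom OneOp = 1" | "ccod OneOp = 0"
| "cdom Id0 = 0" | "ccod Id0 = 0"
| "cdom Id1 = 1" | "ccod Id1 = 1"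
| "cdom Sw = 2" | "ccod Sw = 2"
| "cdom (Seq c d) = cdom c" | "ccod (Seq c d) = ccod d"
| "cdom (Par c d) = cdom c + cdom d" | "ccod (Par c d) = ccod c + ccod d"

fun wf :: "('k, 'r) cterm \<Rightarrow> bool" where
  "wf (Seq c d) = (wf c \<and> wf d \<and> ccod c = cdom d)"
| "wf (Par c d) = (wf c \<and> wf d)"
| "wf _ = True"

fun idc :: "nat \<Rightarrow> 'k circ" where
  "idc 0 = Id0"
| "idc (Suc n) = Par Id1 (idc n)"

fun sw1 :: "nat \<Rightarrow> 'k circ" where
  "sw1 0 = Id1"
| "sw1 (Suc m) = Seq (Par Sw (idc m)) (Par Id1 (sw1 m))"

fun symc :: "nat \<Rightarrow> nat \<Rightarrow> 'k circ" where
  "symc 0 m = idc m"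
| "symc (Suc n) m = Seq (Par Id1 (symc n m)) (Par (sw1 m) (idc n))"

definition init :: "'k::zero circ \<Rightarrow> 'k state" where
  "init c = map_cterm id (\<lambda>_. 0) c"

inductive step :: "int \<Rightarrow> 'k::field state \<Rightarrow> 'k list \<Rightarrow> 'k list \<Rightarrow> 'k state \<Rightarrow> bool" where
  "step t Copy [a] [a, a] Copy"
| "step t Disc [a] [] Disc"
| "step t Add [a, b] [a + b] Add"
| "step t Zero [] [0] Zero"
| "step t (Amp r) [a] [r * a] (Amp r)"
| "step t (Reg b) [a] [b] (Reg a)"
| "step t One [] [if t = 0 then 1 else 0] One"
| "step t CopyOp [a, a] [a] CopyOp"
| "step t DiscOp [] [a] DiscOp"
| "step t AddOp [a + b] [a, b] AddOp"
| "step t ZeroOp [0] [] ZeroOp"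
| "step t (AmpOp r) [r * a] [a] (AmpOp r)"
| "step t (RegOp b) [b] [a] (RegOp a)"
| "step t OneOp [if t = 0 then 1 else 0] [] OneOp"
| "step t Id1 [a] [a] Id1"
| "step t Sw [a, b] [b, a] Sw"
| "step t Id0 [] [] Id0"
| "step t c v w c' \<Longrightarrow> step t d w u d' \<Longrightarrow> step t (Seq c d) v u (Seq c' d')"
| "step t c v1 w1 c' \<Longrightarrow> step t d v2 w2 d' \<Longrightarrow>
     step t (Par c d) (v1 @ v2) (w1 @ w2) (Par c' d')"

definition computation ::
  "'k::field circ \<Rightarrow> int \<Rightarrow> (nat \<Rightarrow> 'k state) \<Rightarrow> (nat \<Rightarrow> 'k list) \<Rightarrow> (nat \<Rightarrow> 'k list) \<Rightarrow> bool" where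
  "computation c t s u v \<longleftrightarrow> t \<le> 0 \<and> s 0 = init c \<and>
     (\<forall>i. step (t + int i) (s i) (u i) (v i) (s (Suc i)))"

type_synonym 'k traj = "int \<Rightarrow> 'k list \<times> 'k list"

definition is_traj :: "nat \<Rightarrow> nat \<Rightarrow> 'k::zero traj \<Rightarrow> bool" where
  "is_traj n m \<sigma> \<longleftrightarrow> (\<forall>i. length (fst (\<sigma> i)) = n \<and> length (snd (\<sigma> i)) = m) \<and>
     (\<exists>j. \<forall>i\<le>j. \<sigma> i = (replicate n 0, replicate m 0))"

definition opsem :: "'k::field circ \<Rightarrow> 'k traj set" where
  "opsem c = {\<sigma>. \<exists>t s u v. computation c t s u v \<and>
      \<sigma> = (\<lambda>i. if i < t then (replicate (cdom c) 0, replicate (ccod c) 0)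
                else (u (nat (i - t)), v (nat (i - t))))}"

definition compT :: "'k traj set \<Rightarrow> 'k traj set \<Rightarrow> 'k traj set" where
  "compT S T = {(\<lambda>i. (fst (\<sigma> i), snd (\<tau> i))) | \<sigma> \<tau>.
      \<sigma> \<in> S \<and> \<tau> \<in> T \<and> (\<forall>i. snd (\<sigma> i) = fst (\<tau> i))}"

definition parT :: "'k traj set \<Rightarrow> 'k traj set \<Rightarrow> 'k traj set" where
  "parT S T = {(\<lambda>i. (fst (\<sigma> i) @ fst (\<tau> i), snd (\<sigma> i) @ snd (\<tau> i))) | \<sigma> \<tau>.
      \<sigma> \<in> S \<and> \<tau> \<in> T}"

definition idT :: "nat \<Rightarrow> 'k::zero traj set" where
  "idT n = {\<sigma>. is_traj n n \<sigma> \<and> (\<forall>i. fst (\<sigma> i) = snd (\<sigma> i))}"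

definition symT :: "nat \<Rightarrow> nat \<Rightarrow> 'k::zero traj set" where
  "symT n m = {\<sigma>. is_traj (n + m) (m + n) \<sigma> \<and>
      (\<forall>i. snd (\<sigma> i) = drop n (fst (\<sigma> i)) @ take n (fst (\<sigma> i)))}"

end

theory Submission
  imports Defs
begin

(* A transition of c ; d is a pair of transitions of c and d that agree on the middle label, and a
   transition of c \<oplus> d is a pair of simultaneous transitions of c and d. Hence the computations of
   a composite circuit are exactly the pairs of computations of its components started at the same
   time. Two trajectories of c and d may come from computations started at different times, but the
   initial state of a well-sorted circuit can make the all-zero transition at every time t \<noteq> 0
   (the only time at which the constant 1 is not silent), so a computation can always be started
   earlier without changing its trajectory. Identities and symmetries are built from wires alone:
   such a circuit never changes state and permutes its inputs, exactly as the identities and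
   symmetries of Traj do. *)

lemma init_Seq [simp]: "init (Seq c d) = Seq (init c) (init d)"
  and init_Par [simp]: "init (Par c d) = Par (init c) (init d)"
  by (simp_all add: init_def)

lemma cdom_map_cterm [simp]: "cdom (map_cterm f g c) = cdom c"
  and ccod_map_cterm [simp]: "ccod (map_cterm f g c) = ccod c"
  by (induction c) simp_all

lemma cdom_init [simp]: "cdom (init c) = cdom c"
  and ccod_init [simp]: "ccod (init c) = ccod c"
  by (simp_all add: init_def)

lemma step_init_idle:
  fixes c :: "'k::field circ"
  assumes "wf c" and "t \<noteq> 0"
  shows "step t (init c) (replicate (cdom c) 0) (replicate (ccod c) 0) (init c)"
proof -
  have idle_generators: "step t One [] [0] One" "step t OneOp [0] [] OneOp"
    "step t Add [0, 0] [0] Add" "step t AddOp [0] [0, 0] AddOp"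
    "step t (Amp r) [0] [0] (Amp r)" "step t (AmpOp r) [0] [0] (AmpOp r)" for r :: 'k
    using step.intros(7,14)[of t] step.intros(3,10)[of t 0 0] step.intros(5,12)[of t r 0] \<open>t \<noteq> 0\<close>
    by simp_all
  from \<open>wf c\<close> show ?thesis
  proof (induction c)
    case (Par c d)
    then show ?case by (auto simp: replicate_add intro: step.intros)
  qed (auto simp: init_def numeral_2_eq_2 intro: step.intros idle_generators)
qed

inductive_cases step_SeqE: "step t (Seq c d) v u x'"
inductive_cases step_ParE: "step t (Par c d) v u x'"

lemma step_Seq_iff:
  "step t (Seq c d) v u x' \<longleftrightarrow> (\<exists>w c' d'. x' = Seq c' d' \<and> step t c v w c' \<and> step t d w u d')"
  by (auto elim!: step_SeqE intro: step.intros)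

lemma step_Par_iff:
  "step t (Par c d) v u x' \<longleftrightarrow> (\<exists>v1 v2 u1 u2 c' d'. x' = Par c' d' \<and> v = v1 @ v2 \<and> u = u1 @ u2
     \<and> step t c v1 u1 c' \<and> step t d v2 u2 d')"
  by (auto elim!: step_ParE intro: step.intros) blast

lemma computation_SeqI:
  assumes "computation c t s1 u w" and "computation d t s2 w v"
  shows "computation (Seq c d) t (\<lambda>i. Seq (s1 i) (s2 i)) u v"
  using assms by (auto simp: computation_def intro: step.intros)

lemma computation_ParI:
  assumes "computation c t s1 u1 v1" and "computation d t s2 u2 v2"
  shows "computation (Par c d) t (\<lambda>i. Par (s1 i) (s2 i)) (\<lambda>i. u1 i @ u2 i) (\<lambda>i. v1 i @ v2 i)"
  using assms by (simp add: computation_def step.intros)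

lemma computation_SeqE:
  assumes comp: "computation (Seq c d) t s u v"
  obtains s1 s2 w where "computation c t s1 u w" and "computation d t s2 w v"
proof -
  have steps: "\<And>i. step (t + int i) (s i) (u i) (v i) (s (Suc i))"
    using comp by (simp add: computation_def)
  have "\<exists>a b. s i = Seq a b" for i
  proof (induction i)
    case 0
    then show ?case using comp by (simp add: computation_def)
  next
    case (Suc i)
    then show ?case using steps[of i] by (auto simp: step_Seq_iff)
  qed
  then obtain s1 s2 where s: "\<And>i. s i = Seq (s1 i) (s2 i)"
    by metis
  have "\<exists>w. step (t + int i) (s1 i) (u i) w (s1 (Suc i)) \<and> step (t + int i) (s2 i) w (v i) (s2 (Suc i))" for i
    using steps[of i] by (simp add: s step_Seq_iff)
  then obtain w where "\<And>i. step (t + int i) (s1 i) (u i) (w i) (s1 (Suc i))"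
    and "\<And>i. step (t + int i) (s2 i) (w i) (v i) (s2 (Suc i))"
    by metis
  with comp s show thesis
    by (auto simp: computation_def intro!: that)
qed

lemma computation_ParE:
  assumes comp: "computation (Par c d) t s u v"
  obtains s1 s2 u1 u2 v1 v2 where "u = (\<lambda>i. u1 i @ u2 i)" and "v = (\<lambda>i. v1 i @ v2 i)"
    and "computation c t s1 u1 v1" and "computation d t s2 u2 v2"
proof -
  have steps: "\<And>i. step (t + int i) (s i) (u i) (v i) (s (Suc i))"
    using comp by (simp add: computation_def)
  have "\<exists>a b. s i = Par a b" for i
  proof (induction i)
    case 0
    then show ?case using comp by (simp add: computation_def)
  next
    case (Suc i)
    then show ?case using steps[of i] by (auto simp: step_Par_iff)
  qed
  then obtain s1 s2 where s: "\<And>i. s i = Par (s1 i) (s2 i)"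
    by metis
  have "\<exists>u1 u2 v1 v2. u i = u1 @ u2 \<and> v i = v1 @ v2 \<and>
      step (t + int i) (s1 i) u1 v1 (s1 (Suc i)) \<and> step (t + int i) (s2 i) u2 v2 (s2 (Suc i))" for i
    using steps[of i] by (auto simp: s step_Par_iff)
  then obtain u1 u2 v1 v2 where "\<And>i. u i = u1 i @ u2 i" and "\<And>i. v i = v1 i @ v2 i"
    and "\<And>i. step (t + int i) (s1 i) (u1 i) (v1 i) (s1 (Suc i))"
    and "\<And>i. step (t + int i) (s2 i) (u2 i) (v2 i) (s2 (Suc i))"
    by metis
  with comp s show thesis
    by (auto simp: computation_def intro!: that)
qed

definition traj_of ::
    "nat \<Rightarrow> nat \<Rightarrow> int \<Rightarrow> (nat \<Rightarrow> 'k::zero list) \<Rightarrow> (nat \<Rightarrow> 'k list) \<Rightarrow> 'k traj" where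
  "traj_of n m t u v =
     (\<lambda>i. if i < t then (replicate n 0, replicate m 0) else (u (nat (i - t)), v (nat (i - t))))"

lemma opsem_iff:
  "\<sigma> \<in> opsem c \<longleftrightarrow> (\<exists>t s u v. computation c t s u v \<and> \<sigma> = traj_of (cdom c) (ccod c) t u v)"
  by (simp add: opsem_def traj_of_def)

lemma traj_of_compose:
  "(\<lambda>i. (fst (traj_of n k t u w i), snd (traj_of k m t w v i))) = traj_of n m t u v"
  by (auto simp: traj_of_def)

lemma traj_of_append:
  "(\<lambda>i. (fst (traj_of n1 m1 t u1 v1 i) @ fst (traj_of n2 m2 t u2 v2 i),
         snd (traj_of n1 m1 t u1 v1 i) @ snd (traj_of n2 m2 t u2 v2 i)))
   = traj_of (n1 + n2) (m1 + m2) t (\<lambda>i. u1 i @ u2 i) (\<lambda>i. v1 i @ v2 i)"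
  by (auto simp: traj_of_def replicate_add)

lemma computation_start_earlier:
  fixes c :: "'k::field circ"
  assumes comp: "computation c t s u v" and "wf c" and "t' \<le> t"
  obtains s' u' v' where "computation c t' s' u' v'"
    and "traj_of (cdom c) (ccod c) t' u' v' = traj_of (cdom c) (ccod c) t u v"
proof -
  define d where "d = nat (t - t')"
  define s' where "s' = (\<lambda>i. if i < d then init c else s (i - d))"
  define u' where "u' = (\<lambda>i. if i < d then replicate (cdom c) 0 else u (i - d))"
  define v' where "v' = (\<lambda>i. if i < d then replicate (ccod c) 0 else v (i - d))"
  have steps: "\<And>i. step (t + int i) (s i) (u i) (v i) (s (Suc i))" and "s 0 = init c" and "t \<le> 0"
    using comp by (auto simp: computation_def)
  have "step (t' + int i) (s' i) (u' i) (v' i) (s' (Suc i))" for i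
  proof (cases "i < d")
    case True
    then have "t' + int i \<noteq> 0"
      using \<open>t \<le> 0\<close> \<open>t' \<le> t\<close> by (simp add: d_def)
    with True show ?thesis
      using step_init_idle[OF \<open>wf c\<close>] \<open>s 0 = init c\<close> by (simp add: s'_def u'_def v'_def)
  next
    case False
    then have "s' i = s (i - d)" "s' (Suc i) = s (Suc (i - d))" "u' i = u (i - d)" "v' i = v (i - d)"
      by (auto simp: s'_def u'_def v'_def Suc_diff_le)
    moreover have "t' + int i = t + int (i - d)"
      using False \<open>t' \<le> t\<close> by (simp add: d_def)
    ultimately show ?thesis
      using steps[of "i - d"] by (simp only:)
  qed
  then have "computation c t' s' u' v'"
    using \<open>s 0 = init c\<close> \<open>t \<le> 0\<close> \<open>t' \<le> t\<close> by (simp add: computation_def s'_def)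
  moreover have "traj_of (cdom c) (ccod c) t' u' v' i = traj_of (cdom c) (ccod c) t u v i" for i
  proof (cases "i < t")
    case True
    then show ?thesis by (auto simp: traj_of_def u'_def v'_def d_def)
  next
    case False
    then have "\<not> nat (i - t') < d" and "nat (i - t') - d = nat (i - t)"
      using \<open>t' \<le> t\<close> by (auto simp: d_def)
    with False \<open>t' \<le> t\<close> show ?thesis by (simp add: traj_of_def u'_def v'_def)
  qed
  ultimately show thesis by (auto intro: that)
qed

lemma opsem_common_start:
  fixes c d :: "'k::field circ"
  assumes "\<sigma> \<in> opsem c" and "\<tau> \<in> opsem d" and "wf c" and "wf d"
  obtains t s1 u1 v1 s2 u2 v2
  where "computation c t s1 u1 v1" and "\<sigma> = traj_of (cdom c) (ccod c) t u1 v1"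
    and "computation d t s2 u2 v2" and "\<tau> = traj_of (cdom d) (ccod d) t u2 v2"
proof -
  obtain t1 s1 u1 v1 where c1: "computation c t1 s1 u1 v1" and \<sigma>: "\<sigma> = traj_of (cdom c) (ccod c) t1 u1 v1"
    using \<open>\<sigma> \<in> opsem c\<close> by (auto simp: opsem_iff)
  obtain t2 s2 u2 v2 where c2: "computation d t2 s2 u2 v2" and \<tau>: "\<tau> = traj_of (cdom d) (ccod d) t2 u2 v2"
    using \<open>\<tau> \<in> opsem d\<close> by (auto simp: opsem_iff)
  show thesis
    using computation_start_earlier[OF c1 \<open>wf c\<close>, of "min t1 t2"]
      computation_start_earlier[OF c2 \<open>wf d\<close>, of "min t1 t2"] that \<sigma> \<tau>
    by (metis min.cobounded1 min.cobounded2)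
qed

lemma opsem_Seq:
  fixes c d :: "'k::field circ"
  assumes "wf c" and "wf d" and "ccod c = cdom d"
  shows "opsem (Seq c d) = compT (opsem c) (opsem d)"
proof (intro set_eqI iffI)
  fix \<sigma>
  assume "\<sigma> \<in> opsem (Seq c d)"
  then obtain t s u v where comp: "computation (Seq c d) t s u v"
    and \<sigma>: "\<sigma> = traj_of (cdom c) (ccod d) t u v"
    by (auto simp: opsem_iff)
  from comp obtain s1 s2 w where "computation c t s1 u w" and "computation d t s2 w v"
    by (rule computation_SeqE)
  then have "traj_of (cdom c) (ccod c) t u w \<in> opsem c" and "traj_of (cdom d) (ccod d) t w v \<in> opsem d"
    by (auto simp: opsem_iff)
  moreover have "\<forall>i. snd (traj_of (cdom c) (ccod c) t u w i) = fst (traj_of (cdom d) (ccod d) t w v i)"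
    using \<open>ccod c = cdom d\<close> by (simp add: traj_of_def)
  moreover have "\<sigma> = (\<lambda>i. (fst (traj_of (cdom c) (ccod c) t u w i), snd (traj_of (cdom d) (ccod d) t w v i)))"
    by (simp add: \<sigma> traj_of_compose \<open>ccod c = cdom d\<close>)
  ultimately show "\<sigma> \<in> compT (opsem c) (opsem d)"
    unfolding compT_def by blast
next
  fix \<sigma>
  assume "\<sigma> \<in> compT (opsem c) (opsem d)"
  then obtain \<sigma>1 \<sigma>2 where "\<sigma>1 \<in> opsem c" and "\<sigma>2 \<in> opsem d"
    and middle: "\<forall>i. snd (\<sigma>1 i) = fst (\<sigma>2 i)" and \<sigma>: "\<sigma> = (\<lambda>i. (fst (\<sigma>1 i), snd (\<sigma>2 i)))"
    unfolding compT_def by blast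
  then obtain t s1 u w s2 w' v
    where c1: "computation c t s1 u w" and \<sigma>1: "\<sigma>1 = traj_of (cdom c) (ccod c) t u w"
      and c2: "computation d t s2 w' v" and \<sigma>2: "\<sigma>2 = traj_of (cdom d) (ccod d) t w' v"
    using opsem_common_start \<open>wf c\<close> \<open>wf d\<close> by metis
  have "w' = w"
  proof
    fix k
    show "w' k = w k"
      using middle[rule_format, of "t + int k"] by (simp add: \<sigma>1 \<sigma>2 traj_of_def)
  qed
  with c1 c2 have "computation (Seq c d) t (\<lambda>i. Seq (s1 i) (s2 i)) u v"
    by (simp add: computation_SeqI)
  then show "\<sigma> \<in> opsem (Seq c d)"
    unfolding opsem_iff \<sigma> \<sigma>1 \<sigma>2 \<open>w' = w\<close> \<open>ccod c = cdom d\<close> traj_of_compose by auto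
qed

lemma opsem_Par:
  fixes c d :: "'k::field circ"
  assumes "wf c" and "wf d"
  shows "opsem (Par c d) = parT (opsem c) (opsem d)"
proof (intro set_eqI iffI)
  fix \<sigma>
  assume "\<sigma> \<in> opsem (Par c d)"
  then obtain t s u v where comp: "computation (Par c d) t s u v"
    and \<sigma>: "\<sigma> = traj_of (cdom c + cdom d) (ccod c + ccod d) t u v"
    by (auto simp: opsem_iff)
  from comp obtain s1 s2 u1 u2 v1 v2 where "u = (\<lambda>i. u1 i @ u2 i)" and "v = (\<lambda>i. v1 i @ v2 i)"
    and "computation c t s1 u1 v1" and "computation d t s2 u2 v2"
    by (rule computation_ParE)
  then have "traj_of (cdom c) (ccod c) t u1 v1 \<in> opsem c" and "traj_of (cdom d) (ccod d) t u2 v2 \<in> opsem d"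
    and "\<sigma> = (\<lambda>i. (fst (traj_of (cdom c) (ccod c) t u1 v1 i) @ fst (traj_of (cdom d) (ccod d) t u2 v2 i),
                   snd (traj_of (cdom c) (ccod c) t u1 v1 i) @ snd (traj_of (cdom d) (ccod d) t u2 v2 i)))"
    by (auto simp: opsem_iff \<sigma> traj_of_append)
  then show "\<sigma> \<in> parT (opsem c) (opsem d)"
    unfolding parT_def by blast
next
  fix \<sigma>
  assume "\<sigma> \<in> parT (opsem c) (opsem d)"
  then obtain \<sigma>1 \<sigma>2 where "\<sigma>1 \<in> opsem c" and "\<sigma>2 \<in> opsem d"
    and \<sigma>: "\<sigma> = (\<lambda>i. (fst (\<sigma>1 i) @ fst (\<sigma>2 i), snd (\<sigma>1 i) @ snd (\<sigma>2 i)))"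
    unfolding parT_def by blast
  then obtain t s1 u1 v1 s2 u2 v2
    where c1: "computation c t s1 u1 v1" and \<sigma>1: "\<sigma>1 = traj_of (cdom c) (ccod c) t u1 v1"
      and c2: "computation d t s2 u2 v2" and \<sigma>2: "\<sigma>2 = traj_of (cdom d) (ccod d) t u2 v2"
    using opsem_common_start \<open>wf c\<close> \<open>wf d\<close> by metis
  from c1 c2 have "computation (Par c d) t (\<lambda>i. Par (s1 i) (s2 i)) (\<lambda>i. u1 i @ u2 i) (\<lambda>i. v1 i @ v2 i)"
    by (rule computation_ParI)
  then show "\<sigma> \<in> opsem (Par c d)"
    unfolding opsem_iff \<sigma> \<sigma>1 \<sigma>2 traj_of_append by auto
qed

fun wiring :: "('k, 'r) cterm \<Rightarrow> bool" where
  "wiring Id0 = True"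
| "wiring Id1 = True"
| "wiring Sw = True"
| "wiring (Seq c d) = (wiring c \<and> wiring d \<and> ccod c = cdom d)"
| "wiring (Par c d) = (wiring c \<and> wiring d)"
| "wiring _ = False"

fun route :: "('k, 'r) cterm \<Rightarrow> 'k list \<Rightarrow> 'k list" where
  "route Sw v = drop 1 v @ take 1 v"
| "route (Seq c d) v = route d (route c v)"
| "route (Par c d) v = route c (take (cdom c) v) @ route d (drop (cdom c) v)"
| "route _ v = v"

lemma wiring_init [simp]: "wiring (init c) = wiring c"
  by (induction c) (simp_all add: init_def)

lemma route_init [simp]: "route (init c) v = route c v"
  by (induction c arbitrary: v) (simp_all add: init_def)

lemma length_route: "wiring x \<Longrightarrow> length v = cdom x \<Longrightarrow> length (route x v) = ccod x"
  by (induction x arbitrary: v) auto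

lemma route_replicate_zero: "wiring x \<Longrightarrow> route x (replicate (cdom x) 0) = replicate (ccod x) 0"
  by (induction x) (auto simp: replicate_add numeral_2_eq_2)

lemma step_wiring_iff:
  "wiring x \<Longrightarrow> step t x v w x' \<longleftrightarrow> x' = x \<and> length v = cdom x \<and> w = route x v"
proof (induction x arbitrary: v w x')
  case (Seq c d)
  then show ?case by (auto simp: step_Seq_iff length_route)
next
  case (Par c d)
  show ?case
  proof
    assume "step t (Par c d) v w x'"
    with Par show "x' = Par c d \<and> length v = cdom (Par c d) \<and> w = route (Par c d) v"
      by (auto simp: step_Par_iff)
  next
    assume routed: "x' = Par c d \<and> length v = cdom (Par c d) \<and> w = route (Par c d) v"
    with Par have "step t (Par c d) (take (cdom c) v @ drop (cdom c) v)
        (route c (take (cdom c) v) @ route d (drop (cdom c) v)) (Par c d)"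
      by (intro step.intros) auto
    with routed show "step t (Par c d) v w x'"
      by simp
  qed
qed (auto elim: step.cases intro: step.intros simp: length_Suc_conv numeral_2_eq_2)

lemma computation_wiring_iff:
  fixes c :: "'k::field circ"
  assumes "wiring c"
  shows "computation c t s u v \<longleftrightarrow>
    t \<le> 0 \<and> s = (\<lambda>_. init c) \<and> (\<forall>i. length (u i) = cdom c \<and> v i = route c (u i))"
proof
  assume comp: "computation c t s u v"
  then have steps: "\<And>i. step (t + int i) (s i) (u i) (v i) (s (Suc i))"
    by (simp add: computation_def)
  have s: "s i = init c" for i
  proof (induction i)
    case 0
    then show ?case using comp by (simp add: computation_def)
  next
    case (Suc i)
    then show ?case using steps[of i] step_wiring_iff[of "init c"] \<open>wiring c\<close> by simp
  qed
  then show "t \<le> 0 \<and> s = (\<lambda>_. init c) \<and> (\<forall>i. length (u i) = cdom c \<and> v i = route c (u i))"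
    using comp steps step_wiring_iff[of "init c"] \<open>wiring c\<close> by (auto simp: computation_def)
qed (use \<open>wiring c\<close> step_wiring_iff[of "init c"] in \<open>auto simp: computation_def\<close>)

lemma opsem_wiring:
  fixes c :: "'k::field circ"
  assumes "wiring c"
  shows "opsem c = {\<sigma>. is_traj (cdom c) (ccod c) \<sigma> \<and> (\<forall>i. snd (\<sigma> i) = route c (fst (\<sigma> i)))}"
proof (intro set_eqI iffI CollectI conjI)
  fix \<sigma>
  assume "\<sigma> \<in> opsem c"
  then obtain t u v where uv: "\<And>i. length (u i) = cdom c \<and> v i = route c (u i)"
    and \<sigma>: "\<sigma> = traj_of (cdom c) (ccod c) t u v"
    by (auto simp: opsem_iff computation_wiring_iff[OF \<open>wiring c\<close>])
  show "is_traj (cdom c) (ccod c) \<sigma>"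
    unfolding is_traj_def \<sigma> traj_of_def using uv length_route[OF \<open>wiring c\<close>]
    by (auto intro!: exI[of _ "t - 1"])
  show "\<forall>i. snd (\<sigma> i) = route c (fst (\<sigma> i))"
    unfolding \<sigma> traj_of_def using uv route_replicate_zero[OF \<open>wiring c\<close>] by auto
next
  fix \<sigma>
  assume "\<sigma> \<in> {\<sigma>. is_traj (cdom c) (ccod c) \<sigma> \<and> (\<forall>i. snd (\<sigma> i) = route c (fst (\<sigma> i)))}"
  then obtain j where zero: "\<forall>i\<le>j. \<sigma> i = (replicate (cdom c) 0, replicate (ccod c) 0)"
    and len: "\<forall>i. length (fst (\<sigma> i)) = cdom c" and routed: "\<forall>i. snd (\<sigma> i) = route c (fst (\<sigma> i))"
    by (auto simp: is_traj_def)
  define t where "t = min j 0"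
  have "computation c t (\<lambda>_. init c) (\<lambda>k. fst (\<sigma> (t + int k))) (\<lambda>k. snd (\<sigma> (t + int k)))"
    using len routed by (simp add: computation_wiring_iff[OF \<open>wiring c\<close>] t_def)
  moreover have "\<sigma> = traj_of (cdom c) (ccod c) t (\<lambda>k. fst (\<sigma> (t + int k))) (\<lambda>k. snd (\<sigma> (t + int k)))"
    using zero by (auto simp: traj_of_def t_def)
  ultimately show "\<sigma> \<in> opsem c"
    unfolding opsem_iff by blast
qed

lemma wiring_idc [simp]: "wiring (idc n)"
  and cdom_idc [simp]: "cdom (idc n) = n"
  and ccod_idc [simp]: "ccod (idc n) = n"
  by (induction n) auto

lemma route_idc: "length v = n \<Longrightarrow> route (idc n) v = v"
  by (induction n arbitrary: v) auto

lemma cdom_sw1 [simp]: "cdom (sw1 m) = Suc m"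
  and ccod_sw1 [simp]: "ccod (sw1 m) = Suc m"
  by (induction m) auto

lemma wiring_sw1 [simp]: "wiring (sw1 m)"
  by (induction m) auto

lemma route_sw1: "length v = Suc m \<Longrightarrow> route (sw1 m) v = drop 1 v @ take 1 v"
proof (induction m arbitrary: v)
  case 0
  then show ?case by (auto simp: length_Suc_conv)
next
  case (Suc m)
  then obtain a b r where "v = a # b # r" and "length r = m"
    by (auto simp: length_Suc_conv)
  then show ?case
    using Suc.IH[of "a # r"] by (simp add: route_idc numeral_2_eq_2)
qed

lemma cdom_symc [simp]: "cdom (symc n m) = n + m"
  and ccod_symc [simp]: "ccod (symc n m) = m + n"
  by (induction n) auto

lemma wiring_symc [simp]: "wiring (symc n m)"
  by (induction n) auto

lemma route_symc: "length v = n + m \<Longrightarrow> route (symc n m) v = drop n v @ take n v"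
proof (induction n arbitrary: v)
  case 0
  then show ?case by (simp add: route_idc)
next
  case (Suc n)
  then obtain a r where "v = a # r" and "length r = n + m"
    by (auto simp: length_Suc_conv)
  then show ?case
    using Suc.IH[of r] route_sw1[of "a # drop n r" m] by (simp add: route_idc)
qed

lemma opsem_idc: "opsem (idc n :: 'k::field circ) = idT n"
  by (auto simp: opsem_wiring idT_def is_traj_def route_idc)

lemma opsem_symc: "opsem (symc n m :: 'k::field circ) = symT n m"
  by (auto simp: opsem_wiring symT_def is_traj_def route_symc)

theorem theorem1:
  fixes c d :: "'k::field circ"
  shows "(wf c \<and> wf d \<and> ccod c = cdom d \<longrightarrow> opsem (Seq c d) = compT (opsem c) (opsem d))
    \<and> (wf c \<and> wf d \<longrightarrow> opsem (Par c d) = parT (opsem c) (opsem d))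
    \<and> opsem (Id0 :: 'k circ) = idT 0
    \<and> opsem (Id1 :: 'k circ) = idT 1
    \<and> opsem (Sw :: 'k circ) = symT 1 1
    \<and> (\<forall>n. opsem (idc n :: 'k circ) = idT n)
    \<and> (\<forall>n m. opsem (symc n m :: 'k circ) = symT n m)"
proof -
  have "opsem (Id0 :: 'k circ) = idT 0" and "opsem (Id1 :: 'k circ) = idT 1"
    using opsem_idc[of 0] opsem_idc[of 1] by (simp_all add: opsem_wiring)
  moreover have "opsem (Sw :: 'k circ) = symT 1 1"
    by (auto simp: opsem_wiring symT_def is_traj_def numeral_2_eq_2)
  ultimately show ?thesis
    using opsem_Seq opsem_Par opsem_idc opsem_symc by blast
qed

end
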